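(* Let an $m$-stage explicit Runge--Kutta method with coefficients $(A,b)$ and step-size coefficient $\gamma=\gamma(A,b)$ be given. Consider a problem of the form $$u_k'(t)=q_k(u(t),t)\,\frac{u_{k-1}(t)-u_k(t)}{\Delta x},\quad k=1,\dots,N,\qquad u_0:=u_N,\qquad u_k(t_0)=u_k^0,$$ with $N\ge1$, $\Delta x>0$, real initial data $u^0\in\mathbb{R}^N$ and functions $q_k:\mathbb{R}^N\times\mathbb{R}\to\mathbb{R}$. Suppose the time step $\Delta t$ and the mesh width $\Delta x$ are chosen so that $$0\le \Delta t\,\frac{q_k(u,t)}{\Delta x}\le\gamma,\qquad k=1,\dots,N,$$ for all values $u,t$. Let $u_{\max}=\max_k u_k^0$ and $u_{\min}=\min_k u_k^0$. Then the numerical solution $u^n$ produced by the Runge--Kutta method applied to this problem satisfies $u^n_k\in[u_{\min},u_{\max}]$ for all $k$ and all $n\ge0$.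
   Context: An explicit Runge--Kutta (ERK) method with $m$ stages is given by a strictly lower-triangular matrix $A=(a_{ij})\in\mathbb{R}^{m\times m}$ and a vector $b\in\mathbb{R}^m$; its nodes are $c_i=\sum_j a_{ij}$. Applied to the ODE system above with step $\Delta t$ and $t_n=t_0+n\Delta t$, one step from $u^n\in\mathbb{R}^N$ is $$y^i_k=u^n_k+\sum_{j=1}^{i-1}a_{ij}\xi^j_k\,(y^j_{k-1}-y^j_k),\ i=1,\dots,m,\qquad u^{n+1}_k=u^n_k+\sum_{i=1}^m b_i\xi^i_k\,(y^i_{k-1}-y^i_k),$$ with $\xi^j_k=\frac{\Delta t}{\Delta x}q_k(y^j,t_n+c_j\Delta t)$ and indices taken periodically ($y_0:=y_N$). Positivity polynomials: treat the $\xi^j_\ell$ ($1\le j\le m$, $\ell\in\mathbb{Z}$) as independent variables and apply the same recursion formally on the infinite grid $\ell\in\mathbb{Z}$; then $u^{n+1}_k=\sum_{i=0}^m P_i(\xi)\,u^n_{k-i}$, where $P_0,\dots,P_m$ are polynomials in the $m(m+1)/2$ variables $\xi^j_\ell$, $1\le j\le m$, $k-(m-j)\le\ell\le k$, which (written in terms of the relative variables $\xi^j_{k-s}$) depend only on $(A,b)$ and not on $k$. The (positivity) step-size coefficient is $$\gamma(A,b):=\sup\{\delta\ge0:\ P_i(\xi)\ge0\ \text{for each }0\le i\le m\text{ and all }\xi\in[0,\delta]^{m(m+1)/2}\},$$ with $\gamma(A,b):=0$ if this set is empty. *)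

theory Defs
  imports Complex_Main "HOL-Library.Extended_Real"
begin

text \<open>An explicit RK method with m stages: coefficients A i j (only 1 \<le> j < i \<le> m are used,
  i.e. A is strictly lower triangular), weights b i (1 \<le> i \<le> m).\<close>

definition rk_node :: "(nat \<Rightarrow> nat \<Rightarrow> real) \<Rightarrow> nat \<Rightarrow> real" where
  "rk_node A i = (\<Sum>j\<in>{1..<i}. A i j)"

text \<open>Formal recursion on the infinite grid Z with independent variables xi j l
  (stage j, grid point l).\<close>

fun inf_stage :: "(nat \<Rightarrow> nat \<Rightarrow> real) \<Rightarrow> (nat \<Rightarrow> int \<Rightarrow> real) \<Rightarrow> (int \<Rightarrow> real)
                   \<Rightarrow> nat \<Rightarrow> int \<Rightarrow> real" where
  "inf_stage A xi u i = (\<lambda>l. u l + (\<Sum>j\<in>{1..<i}. A i j * xi j l *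
        (inf_stage A xi u j (l - 1) - inf_stage A xi u j l)))"

definition inf_step :: "(nat \<Rightarrow> nat \<Rightarrow> real) \<Rightarrow> (nat \<Rightarrow> real) \<Rightarrow> nat \<Rightarrow> (nat \<Rightarrow> int \<Rightarrow> real)
                   \<Rightarrow> (int \<Rightarrow> real) \<Rightarrow> int \<Rightarrow> real" where
  "inf_step A b m xi u = (\<lambda>l. u l + (\<Sum>i\<in>{1..m}. b i * xi i l *
        (inf_stage A xi u i (l - 1) - inf_stage A xi u i l)))"

text \<open>Positivity polynomial P_i(xi): coefficient of u_{k-i} in u^{n+1}_k (taken at k = 0),
  obtained by evaluating the (linear in u) step on the unit vector at grid point -i.\<close>

definition pos_poly :: "(nat \<Rightarrow> nat \<Rightarrow> real) \<Rightarrow> (nat \<Rightarrow> real) \<Rightarrow> nat \<Rightarrow> (nat \<Rightarrow> int \<Rightarrow> real)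
                   \<Rightarrow> nat \<Rightarrow> real" where
  "pos_poly A b m xi i = inf_step A b m xi (\<lambda>l. if l = - int i then 1 else 0) 0"

definition sscoef_set :: "(nat \<Rightarrow> nat \<Rightarrow> real) \<Rightarrow> (nat \<Rightarrow> real) \<Rightarrow> nat \<Rightarrow> real set" where
  "sscoef_set A b m = {\<delta>. \<delta> \<ge> 0 \<and>
      (\<forall>xi. (\<forall>j l. 0 \<le> xi j l \<and> xi j l \<le> \<delta>) \<longrightarrow> (\<forall>i\<le>m. pos_poly A b m xi i \<ge> 0))}"

definition step_size_coef :: "(nat \<Rightarrow> nat \<Rightarrow> real) \<Rightarrow> (nat \<Rightarrow> real) \<Rightarrow> nat \<Rightarrow> ereal" where
  "step_size_coef A b m = (if sscoef_set A b m = {} then 0 else Sup (ereal ` sscoef_set A b m))"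

text \<open>The actual scheme on the periodic grid 1..N. Vectors in R^N are functions nat \<Rightarrow> real
  that vanish outside {1..N}.\<close>

definition prev_idx :: "nat \<Rightarrow> nat \<Rightarrow> nat" where
  "prev_idx N k = (if k = 1 then N else k - 1)"

definition is_vec :: "nat \<Rightarrow> (nat \<Rightarrow> real) \<Rightarrow> bool" where
  "is_vec N u \<longleftrightarrow> (\<forall>k. k \<notin> {1..N} \<longrightarrow> u k = 0)"

fun rk_stage :: "(nat \<Rightarrow> nat \<Rightarrow> real) \<Rightarrow> (nat \<Rightarrow> (nat \<Rightarrow> real) \<Rightarrow> real \<Rightarrow> real) \<Rightarrow> nat
                 \<Rightarrow> real \<Rightarrow> real \<Rightarrow> real \<Rightarrow> (nat \<Rightarrow> real) \<Rightarrow> nat \<Rightarrow> nat \<Rightarrow> real" where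
  "rk_stage A q N dx dt t u i = (\<lambda>k. if k \<in> {1..N} then
      u k + (\<Sum>j\<in>{1..<i}. A i j * (dt / dx * q k (rk_stage A q N dx dt t u j) (t + rk_node A j * dt)) *
          (rk_stage A q N dx dt t u j (prev_idx N k) - rk_stage A q N dx dt t u j k))
      else 0)"

definition rk_step :: "(nat \<Rightarrow> nat \<Rightarrow> real) \<Rightarrow> (nat \<Rightarrow> real) \<Rightarrow> nat
                 \<Rightarrow> (nat \<Rightarrow> (nat \<Rightarrow> real) \<Rightarrow> real \<Rightarrow> real) \<Rightarrow> nat
                 \<Rightarrow> real \<Rightarrow> real \<Rightarrow> real \<Rightarrow> (nat \<Rightarrow> real) \<Rightarrow> nat \<Rightarrow> real" where
  "rk_step A b m q N dx dt t u = (\<lambda>k. if k \<in> {1..N} then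
      u k + (\<Sum>i\<in>{1..m}. b i * (dt / dx * q k (rk_stage A q N dx dt t u i) (t + rk_node A i * dt)) *
          (rk_stage A q N dx dt t u i (prev_idx N k) - rk_stage A q N dx dt t u i k))
      else 0)"

fun rk_sol :: "(nat \<Rightarrow> nat \<Rightarrow> real) \<Rightarrow> (nat \<Rightarrow> real) \<Rightarrow> nat
                 \<Rightarrow> (nat \<Rightarrow> (nat \<Rightarrow> real) \<Rightarrow> real \<Rightarrow> real) \<Rightarrow> nat
                 \<Rightarrow> real \<Rightarrow> real \<Rightarrow> real \<Rightarrow> (nat \<Rightarrow> real) \<Rightarrow> nat \<Rightarrow> nat \<Rightarrow> real" where
  "rk_sol A b m q N dx dt t0 u0 0 = (\<lambda>k. if k \<in> {1..N} then u0 k else 0)"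
| "rk_sol A b m q N dx dt t0 u0 (Suc n) =
     rk_step A b m q N dx dt (t0 + real n * dt) (rk_sol A b m q N dx dt t0 u0 n)"

end

theory Submission imports Defs begin

text \<open>Read the periodic data as a periodic function on the infinite grid. Then one step is
  linear in the data, u^{n+1}_k = \<Sum>_i P_i(\<xi>) u^n_{k-i}, with \<xi> the actual Courant numbers of the
  step. The coefficients sum to one, since constants are preserved, and they are nonnegative since
  every \<xi> lies in [0, \<gamma>]; hence u^{n+1}_k is a convex combination of values of u^n and the bounds
  propagate by induction on n. Because \<gamma> is a supremum that need not be attained, nonnegativity
  at \<xi> is obtained by continuity from t \<xi>, t < 1, after cutting \<xi> down to the finitely many
  variables P_i depends on, so that it is bounded.\<close>

declare inf_stage.simps[simp del] rk_stage.simps[simp del]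

lemma inf_stage_eq: "inf_stage A xi u i l = u l + (\<Sum>j\<in>{1..<i}. A i j * xi j l *
        (inf_stage A xi u j (l - 1) - inf_stage A xi u j l))"
  using inf_stage.simps[of A xi u i] by simp

lemma rk_stage_eq: "rk_stage A q N dx dt t u i k = (if k \<in> {1..N} then
      u k + (\<Sum>j\<in>{1..<i}. A i j * (dt / dx * q k (rk_stage A q N dx dt t u j) (t + rk_node A j * dt)) *
          (rk_stage A q N dx dt t u j (prev_idx N k) - rk_stage A q N dx dt t u j k))
      else 0)"
  using rk_stage.simps[of A q N dx dt t u i] by simp

lemma is_vec_rk_stage: "is_vec N (rk_stage A q N dx dt t u i)"
  unfolding is_vec_def by (simp add: rk_stage_eq)

section \<open>The scheme on the infinite grid\<close>

lemma inf_stage_local: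
  assumes "i \<ge> 1"
    and "\<forall>l'\<in>{l - int i<..l}. u l' = v l'"
    and "\<forall>j\<in>{1..<i}. \<forall>l'\<in>{l - int i<..l}. X j l' = Y j l'"
  shows "inf_stage A X u i l = inf_stage A Y v i l"
  using assms
proof (induction i arbitrary: l rule: less_induct)
  case (less i)
  have IH: "inf_stage A X u j l' = inf_stage A Y v j l'"
    if "j \<in> {1..<i}" "l' \<in> {l - 1, l}" for j l'
    using that less.prems by (intro less.IH) auto
  have "u l = v l" "\<forall>j\<in>{1..<i}. X j l = Y j l"
    using less.prems by auto
  then show ?case
    unfolding inf_stage_eq[of A X u i l] inf_stage_eq[of A Y v i l]
    by (intro arg_cong2[where f = "(+)"] sum.cong) (auto simp: IH)
qed

lemma inf_step_local:
  assumes "\<forall>l'\<in>{l - int m..l}. u l' = v l'"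
    and "\<forall>j\<in>{1..m}. \<forall>l'\<in>{l - int m..l}. X j l' = Y j l'"
  shows "inf_step A b m X u l = inf_step A b m Y v l"
proof -
  have stages: "inf_stage A X u i l' = inf_stage A Y v i l'"
    if "i \<in> {1..m}" "l' \<in> {l - 1, l}" for i l'
    using that assms by (intro inf_stage_local) auto
  have "u l = v l" "\<forall>i\<in>{1..m}. X i l = Y i l"
    using assms by auto
  then show ?thesis
    unfolding inf_step_def by (intro arg_cong2[where f = "(+)"] sum.cong) (auto simp: stages)
qed

lemma inf_stage_linear:
  "inf_stage A X (\<lambda>l. \<Sum>s\<in>S. c s * f s l) i l = (\<Sum>s\<in>S. c s * inf_stage A X (f s) i l)"
proof (induction i arbitrary: l rule: less_induct)
  case (less i)
  have "inf_stage A X (\<lambda>l. \<Sum>s\<in>S. c s * f s l) i l = (\<Sum>s\<in>S. c s * f s l) +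
     (\<Sum>j\<in>{1..<i}. \<Sum>s\<in>S. c s * (A i j * X j l * (inf_stage A X (f s) j (l-1) - inf_stage A X (f s) j l)))"
    by (simp add: inf_stage_eq[of A X _ i l] less.IH sum_subtractf[symmetric] sum_distrib_left
        algebra_simps)
  also have "\<dots> = (\<Sum>s\<in>S. c s * inf_stage A X (f s) i l)"
    by (subst sum.swap) (simp add: inf_stage_eq[of A X _ i l] sum.distrib sum_distrib_left algebra_simps)
  finally show ?case .
qed

lemma inf_step_linear:
  "inf_step A b m X (\<lambda>l. \<Sum>s\<in>S. c s * f s l) l = (\<Sum>s\<in>S. c s * inf_step A b m X (f s) l)"
proof -
  have "inf_step A b m X (\<lambda>l. \<Sum>s\<in>S. c s * f s l) l = (\<Sum>s\<in>S. c s * f s l) +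
     (\<Sum>j\<in>{1..m}. \<Sum>s\<in>S. c s * (b j * X j l * (inf_stage A X (f s) j (l-1) - inf_stage A X (f s) j l)))"
    by (simp add: inf_step_def inf_stage_linear sum_subtractf[symmetric] sum_distrib_left algebra_simps)
  also have "\<dots> = (\<Sum>s\<in>S. c s * inf_step A b m X (f s) l)"
    by (subst sum.swap) (simp add: inf_step_def sum.distrib sum_distrib_left algebra_simps)
  finally show ?thesis .
qed

lemma inf_stage_shift:
  "inf_stage A X u i (l + d) = inf_stage A (\<lambda>j l. X j (l + d)) (\<lambda>l. u (l + d)) i l"
proof (induction i arbitrary: l rule: less_induct)
  case (less i)
  have "inf_stage A X u j (l + d - 1) = inf_stage A (\<lambda>j l. X j (l + d)) (\<lambda>l. u (l + d)) j (l - 1)"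
    if "j < i" for j
    using less.IH[OF that, of "l - 1"] by (simp add: algebra_simps)
  then show ?case
    unfolding inf_stage_eq[of A X u i "l + d"] inf_stage_eq[of A _ _ i l]
    by (intro arg_cong2[where f = "(+)"] sum.cong) (auto simp: less.IH)
qed

lemma inf_step_shift:
  "inf_step A b m X u (l + d) = inf_step A b m (\<lambda>j l. X j (l + d)) (\<lambda>l. u (l + d)) l"
  using inf_stage_shift[of A X u _ "l - 1" d] inf_stage_shift[of A X u _ l d]
  unfolding inf_step_def by (simp add: algebra_simps)

lemma inf_stage_const: "inf_stage A X (\<lambda>_. c) i l = c"
proof (induction i arbitrary: l rule: less_induct)
  case (less i)
  then show ?case by (simp add: inf_stage_eq[of A X _ i l])
qed

lemma inf_step_const: "inf_step A b m X (\<lambda>_. c) l = c"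
  by (simp add: inf_step_def inf_stage_const)

lemma inf_step_pos_poly_expansion:
  "inf_step A b m X w 0 = (\<Sum>s\<in>{0..m}. w (- int s) * pos_poly A b m X s)"
proof -
  define e where "e s = (\<lambda>l::int. if l = - int s then 1 else (0::real))" for s :: nat
  have w_window: "w l = (\<Sum>s\<in>{0..m}. w (- int s) * e s l)" if "l \<in> {- int m..0}" for l
  proof -
    have "(\<Sum>s\<in>{0..m}. w (- int s) * e s l) = (\<Sum>s\<in>{0..m}. if s = nat (- l) then w l else 0)"
      using that by (intro sum.cong refl) (auto simp: e_def)
    then show ?thesis using that by (simp add: nat_le_iff)
  qed
  have "inf_step A b m X w 0 = inf_step A b m X (\<lambda>l. \<Sum>s\<in>{0..m}. w (- int s) * e s l) 0"
    using w_window by (intro inf_step_local) auto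
  also have "\<dots> = (\<Sum>s\<in>{0..m}. w (- int s) * pos_poly A b m X s)"
    unfolding inf_step_linear pos_poly_def e_def ..
  finally show ?thesis .
qed

lemma pos_poly_sum: "(\<Sum>s\<in>{0..m}. pos_poly A b m X s) = 1"
  using inf_step_pos_poly_expansion[of A b m X "\<lambda>_. 1"] by (simp add: inf_step_const)

lemma continuous_inf_stage_scaled:
  "continuous_on UNIV (\<lambda>t::real. inf_stage A (\<lambda>j l. t * X j l) u i l)"
proof (induction i arbitrary: l rule: less_induct)
  case (less i)
  show ?case
    unfolding inf_stage_eq[of A "\<lambda>j l. _ * X j l" u i l]
    by (intro continuous_intros less.IH) auto
qed

lemma continuous_inf_step_scaled:
  "continuous_on UNIV (\<lambda>t::real. inf_step A b m (\<lambda>j l. t * X j l) u l)"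
  unfolding inf_step_def by (intro continuous_intros continuous_inf_stage_scaled)

section \<open>Nonnegativity of the positivity polynomials up to the step-size coefficient\<close>

lemma nonneg_at_right_endpoint:
  fixes f :: "real \<Rightarrow> real"
  assumes "a < b" "isCont f b" "\<forall>t\<in>{a..<b}. 0 \<le> f t"
  shows "0 \<le> f b"
proof -
  have "(f \<longlongrightarrow> f b) (at_left b)"
    using assms(2) by (simp add: filterlim_at_split isCont_def)
  moreover have "eventually (\<lambda>t. 0 \<le> f t) (at_left b)"
    using eventually_at_left_real[OF assms(1)] by eventually_elim (use assms(3) in auto)
  ultimately show ?thesis by (intro tendsto_lowerbound) auto
qed

lemma zero_in_sscoef_set: "0 \<in> sscoef_set A b m"
  unfolding sscoef_set_def
proof safe
  fix xi :: "nat \<Rightarrow> int \<Rightarrow> real" and i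
  assume "\<forall>j l. 0 \<le> xi j l \<and> xi j l \<le> 0"
  then have "xi = (\<lambda>j l. 0)" by (intro ext) (meson order_antisym)
  then show "0 \<le> pos_poly A b m xi i"
    by (simp add: pos_poly_def inf_step_def)
qed

lemma pos_poly_nonneg_bounded:
  assumes "\<forall>j l. 0 \<le> X j l \<and> X j l \<le> M" and "ereal M \<le> step_size_coef A b m" and "s \<le> m"
  shows "0 \<le> pos_poly A b m X s"
proof -
  let ?S = "sscoef_set A b m"
  have scaled: "0 \<le> pos_poly A b m (\<lambda>j l. t * X j l) s" if t: "t \<in> {0..<1}" for t
  proof -
    obtain \<delta> where \<delta>: "\<delta> \<in> ?S" "t * M \<le> \<delta>"
    proof (cases "t * M = 0")
      case True
      then show ?thesis using that zero_in_sscoef_set[of A b m] by auto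
    next
      case False
      have "0 \<le> M" using assms(1) by (meson order_trans)
      then have "ereal (t * M) < ereal M"
        using t False by (auto simp: mult_less_cancel_right1)
      also have "\<dots> \<le> Sup (ereal ` ?S)"
        using assms(2) zero_in_sscoef_set[of A b m] unfolding step_size_coef_def
        by (simp split: if_splits)
      finally obtain a where "a \<in> ?S" "t * M < a" by (auto simp: less_Sup_iff)
      then show ?thesis using that by auto
    qed
    have "\<forall>j l. 0 \<le> t * X j l \<and> t * X j l \<le> \<delta>"
      using t assms(1) \<delta>(2) by (auto intro: order_trans[OF mult_left_mono])
    then show ?thesis using \<delta>(1) assms(3) unfolding sscoef_set_def by simp
  qed
  have "isCont (\<lambda>t. pos_poly A b m (\<lambda>j l. t * X j l) s) 1"
    using continuous_inf_step_scaled unfolding pos_poly_def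
    by (simp add: continuous_on_eq_continuous_at)
  from nonneg_at_right_endpoint[of 0, OF _ this] scaled show ?thesis by simp
qed

lemma pos_poly_local:
  assumes "\<forall>j\<in>{1..m}. \<forall>l\<in>{- int m..0}. X j l = Y j l"
  shows "pos_poly A b m X s = pos_poly A b m Y s"
  unfolding pos_poly_def using assms by (intro inf_step_local) auto

lemma pos_poly_nonneg:
  assumes "\<forall>j l. 0 \<le> X j l \<and> ereal (X j l) \<le> step_size_coef A b m" and "s \<le> m"
  shows "0 \<le> pos_poly A b m X s"
proof -
  define W where "W = {1..m} \<times> {- int m..0}"
  define Y where "Y j l = (if (j, l) \<in> W then X j l else 0)" for j l
  define M where "M = Max ((\<lambda>(j, l). X j l) ` W \<union> {0})"
  have "finite W" unfolding W_def by simp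
  have "0 \<le> step_size_coef A b m"
    using zero_in_sscoef_set[of A b m] unfolding step_size_coef_def by (auto intro: Sup_upper2[of "ereal 0"])
  moreover have "M \<in> (\<lambda>(j, l). X j l) ` W \<union> {0}"
    unfolding M_def using \<open>finite W\<close> by (intro Max_in) auto
  ultimately have "ereal M \<le> step_size_coef A b m"
    using assms(1) by (auto simp: zero_ereal_def)
  moreover have "\<forall>j l. 0 \<le> Y j l \<and> Y j l \<le> M"
    unfolding M_def Y_def using assms(1) \<open>finite W\<close> by (auto intro: Max_ge)
  ultimately have "0 \<le> pos_poly A b m Y s"
    using pos_poly_nonneg_bounded assms(2) by blast
  moreover have "pos_poly A b m X s = pos_poly A b m Y s"
    by (rule pos_poly_local) (auto simp: Y_def W_def)
  ultimately show ?thesis by simp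
qed

section \<open>The periodic scheme as a restriction of the infinite-grid scheme\<close>

definition periodic_index :: "nat \<Rightarrow> int \<Rightarrow> nat" where
  "periodic_index N l = nat ((l - 1) mod int N) + 1"

lemma periodic_index_range: "N \<ge> 1 \<Longrightarrow> periodic_index N l \<in> {1..N}"
  unfolding periodic_index_def by (simp add: nat_less_iff Suc_le_eq)

lemma periodic_index_of_nat: "k \<in> {1..N} \<Longrightarrow> periodic_index N (int k) = k"
  unfolding periodic_index_def by (simp add: mod_pos_pos_trivial) arith

lemma prev_idx_periodic_index:
  assumes "N \<ge> 1"
  shows "prev_idx N (periodic_index N l) = periodic_index N (l - 1)"
proof -
  define r where "r = (l - 1) mod int N"
  have r: "0 \<le> r" "r < int N" using assms unfolding r_def by auto
  have shift: "(l - 1 - 1) mod int N = (r - 1) mod int N"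
    unfolding r_def by (simp add: mod_diff_left_eq)
  show ?thesis
  proof (cases "r = 0")
    case True
    have "(-1::int) mod int N = int N - 1" using assms by (simp add: zmod_minus1)
    then show ?thesis
      using True shift assms unfolding periodic_index_def prev_idx_def r_def[symmetric] by (simp; arith)
  next
    case False
    then have "(r - 1) mod int N = r - 1" using r by (simp add: mod_pos_pos_trivial)
    then show ?thesis
      using False shift r unfolding periodic_index_def prev_idx_def r_def[symmetric] by simp
  qed
qed

text \<open>The paper's \<xi>^j_l for the step from u at time t, extended periodically to all l \<in> \<int>.\<close>

definition courant_numbers ::
  "(nat \<Rightarrow> nat \<Rightarrow> real) \<Rightarrow> (nat \<Rightarrow> (nat \<Rightarrow> real) \<Rightarrow> real \<Rightarrow> real) \<Rightarrow> nat \<Rightarrow> real \<Rightarrow> real \<Rightarrow> real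
    \<Rightarrow> (nat \<Rightarrow> real) \<Rightarrow> nat \<Rightarrow> int \<Rightarrow> real" where
  "courant_numbers A q N dx dt t u = (\<lambda>j l.
     dt * q (periodic_index N l) (rk_stage A q N dx dt t u j) (t + rk_node A j * dt) / dx)"

lemma rk_stage_as_inf_stage:
  assumes "N \<ge> 1"
  shows "rk_stage A q N dx dt t u i (periodic_index N l)
    = inf_stage A (courant_numbers A q N dx dt t u) (\<lambda>l. u (periodic_index N l)) i l"
proof (induction i arbitrary: l rule: less_induct)
  case (less i)
  have "A i j * (dt / dx * q (periodic_index N l) (rk_stage A q N dx dt t u j) (t + rk_node A j * dt)) *
      (rk_stage A q N dx dt t u j (prev_idx N (periodic_index N l))
        - rk_stage A q N dx dt t u j (periodic_index N l))
    = A i j * courant_numbers A q N dx dt t u j l *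
      (inf_stage A (courant_numbers A q N dx dt t u) (\<lambda>l. u (periodic_index N l)) j (l - 1)
        - inf_stage A (courant_numbers A q N dx dt t u) (\<lambda>l. u (periodic_index N l)) j l)"
    if "j \<in> {1..<i}" for j
    using that less.IH[of j] by (simp add: prev_idx_periodic_index[OF assms] courant_numbers_def)
  then show ?case
    unfolding rk_stage_eq[of A q N dx dt t u i] inf_stage_eq[of A _ _ i l]
    using periodic_index_range[OF assms, of l] by (auto intro: sum.cong)
qed

lemma rk_step_as_inf_step:
  assumes "N \<ge> 1" "k \<in> {1..N}"
  shows "rk_step A b m q N dx dt t u k
    = inf_step A b m (courant_numbers A q N dx dt t u) (\<lambda>l. u (periodic_index N l)) (int k)"
proof -
  have k: "periodic_index N (int k) = k" "prev_idx N k = periodic_index N (int k - 1)"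
    using periodic_index_of_nat[OF assms(2)] prev_idx_periodic_index[OF assms(1), of "int k"] by simp_all
  have "b i * (dt / dx * q k (rk_stage A q N dx dt t u i) (t + rk_node A i * dt)) *
      (rk_stage A q N dx dt t u i (prev_idx N k) - rk_stage A q N dx dt t u i k)
    = b i * courant_numbers A q N dx dt t u i (int k) *
      (inf_stage A (courant_numbers A q N dx dt t u) (\<lambda>l. u (periodic_index N l)) i (int k - 1)
        - inf_stage A (courant_numbers A q N dx dt t u) (\<lambda>l. u (periodic_index N l)) i (int k))"
    for i
    using rk_stage_as_inf_stage[OF assms(1), of A q dx dt t u i "int k"]
      rk_stage_as_inf_stage[OF assms(1), of A q dx dt t u i "int k - 1"]
    by (simp add: k courant_numbers_def)
  then show ?thesis
    unfolding rk_step_def inf_step_def if_P[OF assms(2)] k(1) by simp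
qed

lemma convex_combination_bounds:
  fixes w P :: "'a \<Rightarrow> real"
  assumes "(\<Sum>s\<in>S. P s) = 1" "\<forall>s\<in>S. 0 \<le> P s" "\<forall>s\<in>S. lo \<le> w s \<and> w s \<le> hi"
  shows "lo \<le> (\<Sum>s\<in>S. w s * P s) \<and> (\<Sum>s\<in>S. w s * P s) \<le> hi"
proof
  have "lo = (\<Sum>s\<in>S. lo * P s)" using assms(1) by (simp add: sum_distrib_left[symmetric])
  also have "\<dots> \<le> (\<Sum>s\<in>S. w s * P s)"
    using assms by (intro sum_mono mult_right_mono) auto
  finally show "lo \<le> (\<Sum>s\<in>S. w s * P s)" .
  have "(\<Sum>s\<in>S. w s * P s) \<le> (\<Sum>s\<in>S. hi * P s)"
    using assms by (intro sum_mono mult_right_mono) auto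
  also have "\<dots> = hi" using assms(1) by (simp add: sum_distrib_left[symmetric])
  finally show "(\<Sum>s\<in>S. w s * P s) \<le> hi" .
qed

lemma rk_step_bounds:
  assumes "N \<ge> 1"
    and "\<forall>k\<in>{1..N}. \<forall>u t. is_vec N u \<longrightarrow>
           0 \<le> dt * q k u t / dx \<and> ereal (dt * q k u t / dx) \<le> step_size_coef A b m"
    and "\<forall>k\<in>{1..N}. lo \<le> u k \<and> u k \<le> hi"
    and "k \<in> {1..N}"
  shows "lo \<le> rk_step A b m q N dx dt t u k \<and> rk_step A b m q N dx dt t u k \<le> hi"
proof -
  \<comment> \<open>shift grid point k to 0, where the positivity polynomials are taken\<close>
  define X where "X = (\<lambda>j l. courant_numbers A q N dx dt t u j (l + int k))"
  define w where "w = (\<lambda>l. u (periodic_index N (l + int k)))"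
  have "rk_step A b m q N dx dt t u k = inf_step A b m X w 0"
    using rk_step_as_inf_step[OF assms(1,4)] inf_step_shift[of _ _ _ _ _ 0 "int k"]
    unfolding X_def w_def by simp
  also have "\<dots> = (\<Sum>s\<in>{0..m}. w (- int s) * pos_poly A b m X s)"
    by (rule inf_step_pos_poly_expansion)
  finally have expansion: "rk_step A b m q N dx dt t u k = \<dots>" .
  have "\<forall>j l. 0 \<le> X j l \<and> ereal (X j l) \<le> step_size_coef A b m"
    using assms(2) periodic_index_range[OF assms(1)] is_vec_rk_stage
    unfolding X_def courant_numbers_def by blast
  then have "\<forall>s\<in>{0..m}. 0 \<le> pos_poly A b m X s"
    using pos_poly_nonneg by auto
  moreover have "\<forall>s\<in>{0..m}. lo \<le> w (- int s) \<and> w (- int s) \<le> hi"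
    using assms(3) periodic_index_range[OF assms(1)] unfolding w_def by blast
  ultimately show ?thesis
    unfolding expansion by (intro convex_combination_bounds pos_poly_sum)
qed

theorem theorem1:
  fixes A :: "nat \<Rightarrow> nat \<Rightarrow> real" and b :: "nat \<Rightarrow> real" and m :: nat
    and q :: "nat \<Rightarrow> (nat \<Rightarrow> real) \<Rightarrow> real \<Rightarrow> real"
    and N :: nat and dx dt t0 :: real and u0 :: "nat \<Rightarrow> real"
  assumes "N \<ge> 1" and "dx > 0"
    and "\<forall>k\<in>{1..N}. \<forall>u t. is_vec N u \<longrightarrow>
           0 \<le> dt * q k u t / dx \<and> ereal (dt * q k u t / dx) \<le> step_size_coef A b m"
  shows "\<forall>n. \<forall>k\<in>{1..N}.
           Min (u0 ` {1..N}) \<le> rk_sol A b m q N dx dt t0 u0 n k \<and>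
           rk_sol A b m q N dx dt t0 u0 n k \<le> Max (u0 ` {1..N})"
proof
  fix n
  show "\<forall>k\<in>{1..N}. Min (u0 ` {1..N}) \<le> rk_sol A b m q N dx dt t0 u0 n k \<and>
           rk_sol A b m q N dx dt t0 u0 n k \<le> Max (u0 ` {1..N})"
  proof (induction n)
    case 0
    then show ?case by (auto intro: Min_le Max_ge)
  next
    case (Suc n)
    show ?case using rk_step_bounds[OF assms(1,3) Suc.IH] by simp
  qed
qed

end
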